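(* Let $N\ge 1$ be an integer and let $g,h,u_m,\alpha_1,\delta_h,\delta_q$ be real numbers. Define $c_i=\frac{i+1}{2i+1}\alpha_1$ and $a_i=\frac{i-1}{2i-1}\alpha_1$ for $i=2,\dots,N$. Let $\boldsymbol{A}_H\in\mathbb{R}^{(N+3)\times(N+3)}$ be the matrix (rows and columns indexed $1,\dots,N+3$) whose only nonzero entries are: - row 1: entry $(1,2)=1$; - row 2: $(2,1)=gh-u_m^2-\tfrac13\alpha_1^2$, $(2,2)=2u_m$, $(2,3)=\tfrac23\alpha_1$, $(2,N+3)=gh$; - rows $3,\dots,N+2$ (the "moment block", row $k+2$ corresponding to moment $k=1,\dots,N$): diagonal entries $(k+2,k+2)=u_m$ for $k=1,\dots,N$; superdiagonal entries $(k+2,k+3)=c_{k+1}$ for $k=1,\dots,N-1$; subdiagonal entries $(k+2,k+1)=a_k$ for $k=2,\dots,N$; in addition $(3,1)=-2u_m\alpha_1$, $(3,2)=2\alpha_1$, and, if $N\ge2$, $(4,1)=-\tfrac23\alpha_1^2$; - row $N+3$: $(N+3,1)=\delta_h$ and $(N+3,j)=\delta_q$ for $j=2,\dots,N+2$, $(N+3,N+3)=0$. Let $A_2\in\mathbb{R}^{N\times N}$ be the tridiagonal matrix with zero diagonal, superdiagonal entries $c_2,\dots,c_N$ and subdiagonal entries $a_2,\dots,a_N$ (for $N=1$, $A_2$ is the $1\times1$ zero matrix). Then the characteristic polynomial $\chi_A(\lambda)=\det(\boldsymbol{A}_H-\lambda I)$ satisfies $$\chi_A(\lambda)=\Big[(-\lambda)\big((\lambda-u_m)^2-gh-\alpha_1^2\big)+gh\,(\delta_h+\lambda\delta_q+2\alpha_1\delta_q)\Big]\cdot\chi_{A_2}(\lambda-u_m),$$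 where $\chi_{A_2}(\lambda-u_m)=\det\big(A_2-(\lambda-u_m)I\big)$.
   Context: $\boldsymbol{A}_H$ is the system matrix of the Hyperbolic Shallow Water Exner Moment (HSWEM) model in the conservative variables $(h,hu_m,h\alpha_1,\dots,h\alpha_N,b)$, where $h$ is water height, $g$ gravitational acceleration, $u_m$ mean velocity, $\alpha_1,\dots,\alpha_N$ the Legendre moment coefficients of the vertical velocity profile, $b$ the bottom, and $\delta_h=\partial_h Q_b$, $\delta_q=\partial_{hu_m}Q_b$ are partial derivatives of the solid transport discharge $Q_b$; for the statement these are just real parameters. *)

theory Defs
  imports "Jordan_Normal_Form.Determinant"
begin

definition c_coef :: "real \<Rightarrow> nat \<Rightarrow> real" where
  "c_coef \<alpha>1 i = real (i + 1) / real (2 * i + 1) * \<alpha>1"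

definition a_coef :: "real \<Rightarrow> nat \<Rightarrow> real" where
  "a_coef \<alpha>1 i = (real i - 1) / (2 * real i - 1) * \<alpha>1"

definition AH_entry :: "nat \<Rightarrow> real \<Rightarrow> real \<Rightarrow> real \<Rightarrow> real \<Rightarrow> real \<Rightarrow> real \<Rightarrow> nat \<Rightarrow> nat \<Rightarrow> real" where
  "AH_entry N g h um \<alpha>1 \<delta>h \<delta>q i j =
    (if i = 1 then (if j = 2 then 1 else 0)
     else if i = 2 then
       (if j = 1 then g * h - um\<^sup>2 - \<alpha>1\<^sup>2 / 3
        else if j = 2 then 2 * um
        else if j = 3 then 2 / 3 * \<alpha>1
        else if j = N + 3 then g * h
        else 0)
     else if 3 \<le> i \<and> i \<le> N + 2 then
       (let k = i - 2 in
        if j = i then um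
        else if j = i + 1 \<and> 1 \<le> k \<and> k \<le> N - 1 then c_coef \<alpha>1 (k + 1)
        else if j + 1 = i \<and> 2 \<le> k \<and> k \<le> N then a_coef \<alpha>1 k
        else if i = 3 \<and> j = 1 then - 2 * um * \<alpha>1
        else if i = 3 \<and> j = 2 then 2 * \<alpha>1
        else if i = 4 \<and> j = 1 \<and> 2 \<le> N then - 2 / 3 * \<alpha>1\<^sup>2
        else 0)
     else if i = N + 3 then
       (if j = 1 then \<delta>h
        else if 2 \<le> j \<and> j \<le> N + 2 then \<delta>q
        else 0)
     else 0)"

text \<open>The (N+3)x(N+3) matrix A_H (JNF matrices are 0-indexed, so shift by one).\<close>
definition A_H :: "nat \<Rightarrow> real \<Rightarrow> real \<Rightarrow> real \<Rightarrow> real \<Rightarrow> real \<Rightarrow> real \<Rightarrow> real mat" where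
  "A_H N g h um \<alpha>1 \<delta>h \<delta>q =
     mat (N + 3) (N + 3) (\<lambda>(i, j). AH_entry N g h um \<alpha>1 \<delta>h \<delta>q (i + 1) (j + 1))"

definition A2_entry :: "nat \<Rightarrow> real \<Rightarrow> nat \<Rightarrow> nat \<Rightarrow> real" where
  "A2_entry N \<alpha>1 i j =
    (if j = i + 1 \<and> 1 \<le> i \<and> i \<le> N - 1 then c_coef \<alpha>1 (i + 1)
     else if j + 1 = i \<and> 2 \<le> i \<and> i \<le> N then a_coef \<alpha>1 i
     else 0)"

definition A_2 :: "nat \<Rightarrow> real \<Rightarrow> real mat" where
  "A_2 N \<alpha>1 = mat N N (\<lambda>(i, j). A2_entry N \<alpha>1 (i + 1) (j + 1))"

end

theory Submission
  imports Defs
begin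

text \<open>
  Adding \<open>\<lambda>\<close> times column 2 and \<open>2\<alpha>\<^sub>1\<close> times column 3 to column 1 of
  \<open>A\<^sub>H - \<lambda>I\<close> does not change the determinant; it turns row 1 into the unit row
  \<open>e\<^sub>2\<close> and cancels the entries \<open>-2u\<^sub>m\<alpha>\<^sub>1\<close> and \<open>-2\<alpha>\<^sub>1\<^sup>2/3\<close> of column 1
  inside the moment block. Expanding along row 1 leaves a bordered matrix
  \<open>[[q, r\<^sup>T, p], [0, T, 0], [d, s\<^sup>T, e]]\<close> with \<open>T = A\<^sub>2 - (\<lambda> - u\<^sub>m)I\<close>,
  \<open>q = gh + \<alpha>\<^sub>1\<^sup>2 - (\<lambda> - u\<^sub>m)\<^sup>2\<close>, \<open>p = gh\<close>,
  \<open>d = \<delta>\<^sub>h + \<lambda>\<delta>\<^sub>q + 2\<alpha>\<^sub>1\<delta>\<^sub>q\<close> and \<open>e = -\<lambda>\<close>; expanding it along its first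
  column shows that its determinant is \<open>(q e - p d) det T\<close>.
\<close>

lemma laplace_expansion_column_supported:
  assumes A: "(A :: 'a :: comm_ring_1 mat) \<in> carrier_mat n n" and j: "j < n"
    and S: "S \<subseteq> {..<n}" and zero: "\<And>i. i < n \<Longrightarrow> i \<notin> S \<Longrightarrow> A $$ (i, j) = 0"
  shows "det A = (\<Sum>i\<in>S. A $$ (i, j) * cofactor A i j)"
  unfolding laplace_expansion_column[OF A j]
  by (rule sum.mono_neutral_right) (use S zero in auto)

lemma laplace_expansion_row_supported:
  assumes A: "(A :: 'a :: comm_ring_1 mat) \<in> carrier_mat n n" and i: "i < n"
    and S: "S \<subseteq> {..<n}" and zero: "\<And>j. j < n \<Longrightarrow> j \<notin> S \<Longrightarrow> A $$ (i, j) = 0"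
  shows "det A = (\<Sum>j\<in>S. A $$ (i, j) * cofactor A i j)"
  unfolding laplace_expansion_row[OF A i]
  by (rule sum.mono_neutral_right) (use S zero in auto)

definition bordered_mat ::
  "'a :: zero mat \<Rightarrow> 'a \<Rightarrow> (nat \<Rightarrow> 'a) \<Rightarrow> 'a \<Rightarrow> 'a \<Rightarrow> (nat \<Rightarrow> 'a) \<Rightarrow> 'a \<Rightarrow> 'a mat" where
  "bordered_mat T q r p d s e = (let n = dim_row T in mat (n + 2) (n + 2) (\<lambda>(i, j).
     if i = 0 then (if j = 0 then q else if j \<le> n then r (j - 1) else p)
     else if i \<le> n then (if j = 0 \<or> j = n + 1 then 0 else T $$ (i - 1, j - 1))
     else (if j = 0 then d else if j \<le> n then s (j - 1) else e)))"

lemma dim_bordered_mat [simp]: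
  "dim_row (bordered_mat T q r p d s e) = dim_row T + 2"
  "dim_col (bordered_mat T q r p d s e) = dim_row T + 2"
  by (simp_all add: bordered_mat_def Let_def)

lemma index_mat_delete [simp]:
  "i' < dim_row A - 1 \<Longrightarrow> j' < dim_col A - 1 \<Longrightarrow>
    mat_delete A i j $$ (i', j') = A $$ (if i' < i then i' else Suc i', if j' < j then j' else Suc j')"
  by (simp add: mat_delete_def)

lemma det_bordered_mat:
  fixes T :: "'a :: comm_ring_1 mat"
  assumes T: "T \<in> carrier_mat n n"
  shows "det (bordered_mat T q r p d s e) = (q * e - p * d) * det T"
proof -
  let ?B = "bordered_mat T q r p d s e"
  have B: "?B \<in> carrier_mat (n + 2) (n + 2)" using T by (intro carrier_matI) auto
  have B_nth: "?B $$ (i, j) = (if i = 0 then (if j = 0 then q else if j \<le> n then r (j - 1) else p)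
     else if i \<le> n then (if j = 0 \<or> j = n + 1 then 0 else T $$ (i - 1, j - 1))
     else (if j = 0 then d else if j \<le> n then s (j - 1) else e))"
    if "i < n + 2" "j < n + 2" for i j
    using that T by (simp add: bordered_mat_def)
  have cof_top: "cofactor ?B 0 0 = e * det T"
  proof -
    let ?C = "mat_delete ?B 0 0"
    have C: "?C \<in> carrier_mat (n + 1) (n + 1)" using mat_delete_carrier[OF B] by simp
    have minor: "mat_delete ?C n n = T"
      by (rule eq_matI) (use T in \<open>auto simp: B_nth\<close>)
    have "det ?C = ?C $$ (n, n) * cofactor ?C n n"
      by (subst laplace_expansion_column_supported[OF C, of n "{n}"])
        (use T in \<open>auto simp: B_nth\<close>)
    then show ?thesis using minor T by (simp add: cofactor_def B_nth)
  qed
  have cof_bottom: "cofactor ?B (n + 1) 0 = - p * det T"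
  proof -
    let ?C = "mat_delete ?B (n + 1) 0"
    have C: "?C \<in> carrier_mat (n + 1) (n + 1)" using mat_delete_carrier[OF B] by simp
    have minor: "mat_delete ?C 0 n = T"
      by (rule eq_matI) (use T in \<open>auto simp: B_nth\<close>)
    have "det ?C = ?C $$ (0, n) * cofactor ?C 0 n"
      by (subst laplace_expansion_column_supported[OF C, of n "{0}"])
        (use T in \<open>auto simp: B_nth\<close>)
    then show ?thesis using minor T
      by (simp add: cofactor_def B_nth mult.left_commute[of "(-1) ^ n"] flip: power_add)
  qed
  have "det ?B = ?B $$ (0, 0) * cofactor ?B 0 0 + ?B $$ (n + 1, 0) * cofactor ?B (n + 1) 0"
    by (subst laplace_expansion_column_supported[OF B, of 0 "{0, n + 1}"]) (auto simp: B_nth)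
  then show ?thesis using cof_top cof_bottom by (simp add: B_nth algebra_simps)
qed

definition A_H_col_reduced ::
  "nat \<Rightarrow> real \<Rightarrow> real \<Rightarrow> real \<Rightarrow> real \<Rightarrow> real \<Rightarrow> real \<Rightarrow> real \<Rightarrow> real mat" where
  "A_H_col_reduced N g h um \<alpha>1 \<delta>h \<delta>q lam =
     addcol (2 * \<alpha>1) 0 2 (addcol lam 0 1 (A_H N g h um \<alpha>1 \<delta>h \<delta>q - lam \<cdot>\<^sub>m 1\<^sub>m (N + 3)))"

lemma dim_A_H_col_reduced [simp]:
  "dim_row (A_H_col_reduced N g h um \<alpha>1 \<delta>h \<delta>q lam) = N + 3"
  "dim_col (A_H_col_reduced N g h um \<alpha>1 \<delta>h \<delta>q lam) = N + 3"
  by (simp_all add: A_H_col_reduced_def A_H_def)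

lemma det_A_H_col_reduced:
  "det (A_H_col_reduced N g h um \<alpha>1 \<delta>h \<delta>q lam) =
    det (A_H N g h um \<alpha>1 \<delta>h \<delta>q - lam \<cdot>\<^sub>m 1\<^sub>m (N + 3))"
proof -
  let ?M = "A_H N g h um \<alpha>1 \<delta>h \<delta>q - lam \<cdot>\<^sub>m 1\<^sub>m (N + 3)"
  have M: "?M \<in> carrier_mat (N + 3) (N + 3)"
    by (intro carrier_matI) (simp_all add: A_H_def)
  then have M1: "addcol lam 0 1 ?M \<in> carrier_mat (N + 3) (N + 3)"
    by (intro carrier_matI) simp_all
  have "det (addcol (2 * \<alpha>1) 0 2 (addcol lam 0 1 ?M)) = det (addcol lam 0 1 ?M)"
    by (rule det_addcol[OF _ _ M1]) simp_all
  also have "\<dots> = det ?M"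
    by (rule det_addcol[OF _ _ M]) simp_all
  finally show ?thesis unfolding A_H_col_reduced_def .
qed

lemma A_H_col_reduced_nth:
  assumes "i < N + 3" "j < N + 3"
  shows "A_H_col_reduced N g h um \<alpha>1 \<delta>h \<delta>q lam $$ (i, j) =
    (let M = \<lambda>i j. AH_entry N g h um \<alpha>1 \<delta>h \<delta>q (i + 1) (j + 1) - (if i = j then lam else 0) in
     if j = 0 then M i 0 + lam * M i 1 + 2 * \<alpha>1 * M i 2 else M i j)"
  using assms by (simp add: A_H_col_reduced_def A_H_def Let_def)

lemma A_H_col_reduced_first_row:
  assumes "j < N + 3"
  shows "A_H_col_reduced N g h um \<alpha>1 \<delta>h \<delta>q lam $$ (0, j) = (if j = 1 then 1 else 0)"
  using assms by (simp add: A_H_col_reduced_nth AH_entry_def)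

lemma A_H_col_reduced_minor:
  assumes "N \<ge> 1"
  shows "mat_delete (A_H_col_reduced N g h um \<alpha>1 \<delta>h \<delta>q lam) 0 1 =
    bordered_mat (A_2 N \<alpha>1 - (lam - um) \<cdot>\<^sub>m 1\<^sub>m N)
      (g * h + \<alpha>1\<^sup>2 - (lam - um)\<^sup>2) (\<lambda>k. if k = 0 then 2 / 3 * \<alpha>1 else 0) (g * h)
      (\<delta>h + lam * \<delta>q + 2 * \<alpha>1 * \<delta>q) (\<lambda>_. \<delta>q) (- lam)"
    (is "?D = ?B")
proof (rule eq_matI)
  fix i j assume "i < dim_row ?B" "j < dim_col ?B"
  then have ij: "i < N + 2" "j < N + 2" by (simp_all add: A_2_def)
  show "?D $$ (i, j) = ?B $$ (i, j)"
  proof (cases "j = 0")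
    case True
    then show ?thesis using ij assms
      by (auto simp: A_H_col_reduced_nth bordered_mat_def A_2_def AH_entry_def
          a_coef_def c_coef_def power2_eq_square algebra_simps)
  next
    case False
    then show ?thesis using ij assms
      by (auto simp: A_H_col_reduced_nth bordered_mat_def A_2_def AH_entry_def A2_entry_def)
  qed
qed (simp_all add: A_H_col_reduced_def A_H_def A_2_def)

theorem theorem1:
  fixes N :: nat and g h um \<alpha>1 \<delta>h \<delta>q lam :: real
  assumes "N \<ge> 1"
  shows "det (A_H N g h um \<alpha>1 \<delta>h \<delta>q - lam \<cdot>\<^sub>m 1\<^sub>m (N + 3)) =
    ((- lam) * ((lam - um)\<^sup>2 - g * h - \<alpha>1\<^sup>2) + g * h * (\<delta>h + lam * \<delta>q + 2 * \<alpha>1 * \<delta>q))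
    * det (A_2 N \<alpha>1 - (lam - um) \<cdot>\<^sub>m 1\<^sub>m N)"
proof -
  let ?R = "A_H_col_reduced N g h um \<alpha>1 \<delta>h \<delta>q lam"
  let ?T = "A_2 N \<alpha>1 - (lam - um) \<cdot>\<^sub>m 1\<^sub>m N"
  have R: "?R \<in> carrier_mat (N + 3) (N + 3)" by (intro carrier_matI) simp_all
  have T: "?T \<in> carrier_mat N N" by (intro carrier_matI) (simp_all add: A_2_def)
  have "det (A_H N g h um \<alpha>1 \<delta>h \<delta>q - lam \<cdot>\<^sub>m 1\<^sub>m (N + 3)) = det ?R"
    by (rule det_A_H_col_reduced[symmetric])
  also have "\<dots> = ?R $$ (0, 1) * cofactor ?R 0 1"
    by (subst laplace_expansion_row_supported[OF R, of 0 "{1}"])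
      (simp_all add: A_H_col_reduced_first_row)
  also have "\<dots> = - det (mat_delete ?R 0 1)"
    by (simp add: A_H_col_reduced_first_row cofactor_def)
  also have "\<dots> = - ((g * h + \<alpha>1\<^sup>2 - (lam - um)\<^sup>2) * (- lam)
      - g * h * (\<delta>h + lam * \<delta>q + 2 * \<alpha>1 * \<delta>q)) * det ?T"
    unfolding A_H_col_reduced_minor[OF assms] det_bordered_mat[OF T] by (simp add: algebra_simps)
  finally show ?thesis by (simp add: algebra_simps)
qed

end
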